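(* Assume the setting in the context, and let $\mathbf d^*$ be any $\Phi_{\mathfrak B}$-optimal design with $\boldsymbol\Sigma^*=\mathbf M(\mathbf d^* )^{-1}=(c^*_{jk})$. Then for all $j,k\in\{1,\dots,m\}$ with $j\ne k$, writing $\mathbf E_{jk}=(\mathbf e_j,\mathbf e_k)$: $$|c^*_{jk}|\le\frac{\alpha}{2}K\,\lambda_{\max}\big(\mathbf E_{jk}'(\mathbf B\mathbf B')^{-1}\mathbf E_{jk}\big),$$ $$|c^*_{jk}|\le\frac{\alpha}{2}\lambda_{\max}\big(\mathbf E_{jk}'\mathbf N^+(\mathbf w^{(jk+)})\mathbf E_{jk}\big),$$ $$|c^*_{jk}|\le\frac{\alpha}{2}\lambda_{\max}\big(\mathbf E_{jk}'\mathbf N^+(\mathbf w^{(jk* )})\mathbf E_{jk}\big).$$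
   Context: Let $n,m,N,K$ be positive integers with $2\le m\le N\le n$, and let $\mathbf f_1,\dots,\mathbf f_n\in\mathbb R^m$ span $\mathbb R^m$. A (binary) design is $\mathbf d\in\{0,1\}^n$ with $\sum_i d_i=N$; its information matrix is $\mathbf M(\mathbf d)=\sum_{i=1}^n d_i\mathbf f_i\mathbf f_i'$. For $\ell\in\{1,\dots,K\}$ let $\mathbf B_\ell$ be a real $m\times s_\ell$ matrix, $\mathbf B=(\mathbf B_1,\dots,\mathbf B_K)$, with column space of $\mathbf B$ equal to $\mathbb R^m$ and no zero column. For positive definite $\mathbf M$, $\Phi_{\mathfrak B}(\mathbf M)=\max_{\ell}\mathrm{tr}(\mathbf B_\ell'\mathbf M^{-1}\mathbf B_\ell)$. A $\Phi_{\mathfrak B}$-optimal design minimizes $\Phi_{\mathfrak B}(\mathbf M(\mathbf d))$ over designs $\mathbf d$ with nonsingular $\mathbf M(\mathbf d)$. Let $\mathbf d_0$ be a design with nonsingular $\mathbf M(\mathbf d_0)$ and $\alpha=\Phi_{\mathfrak B}(\mathbf M(\mathbf d_0))$. For $\mathbf w\in\mathbb R^K$, $\mathbf w\ge 0$, $\sum w_\ell=1$, let $\mathbf N(\mathbf w)=\sum_\ell w_\ell\mathbf B_\ell\mathbf B_\ell'$; $\mathbf A^+$ is the Moore–Penrose pseudoinverse, $\lambda_{\max}$ the largest eigenvalue, $\mathbf e_j$ the $j$-th unit vector. For $j\in\{1,\dots,m\}$: write $\mathbf B^+\mathbf e_j=((\mathbf h^{(j+)}_1)',\dots,(\mathbf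 h^{(j+)}_K)')'$ with $\mathbf h^{(j+)}_\ell\in\mathbb R^{s_\ell}$, and set $w^{(j+)}_\ell=\|\mathbf h^{(j+)}_\ell\|/\sum_{t}\|\mathbf h^{(j+)}_t\|$; $\mathbf w^{(j* )}$ is a minimizer of $\mathbf e_j'\mathbf N^+(\mathbf w)\mathbf e_j$ over all such $\mathbf w$ with $\mathbf e_j\in\mathcal C(\mathbf N(\mathbf w))$. Then $\mathbf w^{(jk+)}=\tfrac12(\mathbf w^{(j+)}+\mathbf w^{(k+)})$ and $\mathbf w^{(jk* )}=\tfrac12(\mathbf w^{(j* )}+\mathbf w^{(k* )})$. *)

theory Defs
  imports "HOL-Analysis.Analysis"
begin

definition outer :: "real^'m \<Rightarrow> real^'m^'m" where
  "outer x = (\<chi> a b. x$a * x$b)"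

definition info_mat :: "('i::finite \<Rightarrow> real^'m) \<Rightarrow> ('i \<Rightarrow> real) \<Rightarrow> real^'m^'m" where
  "info_mat f d = (\<Sum>i\<in>UNIV. d i *\<^sub>R outer (f i))"

definition is_design :: "nat \<Rightarrow> ('i::finite \<Rightarrow> real) \<Rightarrow> bool" where
  "is_design N d \<longleftrightarrow> (\<forall>i. d i = 0 \<or> d i = 1) \<and> (\<Sum>i\<in>UNIV. d i) = real N"

(* block B_l of B: the columns c of B with g c = l (other columns replaced by zero) *)
definition blk :: "real^'c^'m \<Rightarrow> ('c \<Rightarrow> 'k) \<Rightarrow> 'k \<Rightarrow> real^'c^'m" where
  "blk B g l = (\<chi> a c. if g c = l then B$a$c else 0)"

definition PhiB :: "real^'c^'m \<Rightarrow> ('c \<Rightarrow> 'k::finite) \<Rightarrow> real^'m^'m \<Rightarrow> real" where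
  "PhiB B g M = Max (range (\<lambda>l. trace (transpose (blk B g l) ** matrix_inv M ** blk B g l)))"

definition PhiB_optimal ::
  "('i::finite \<Rightarrow> real^'m) \<Rightarrow> nat \<Rightarrow> real^'c^'m \<Rightarrow> ('c \<Rightarrow> 'k::finite) \<Rightarrow> ('i \<Rightarrow> real) \<Rightarrow> bool" where
  "PhiB_optimal f N B g d \<longleftrightarrow> is_design N d \<and> invertible (info_mat f d) \<and>
     (\<forall>d'. is_design N d' \<and> invertible (info_mat f d') \<longrightarrow>
        PhiB B g (info_mat f d) \<le> PhiB B g (info_mat f d'))"

definition NN :: "real^'c^'m \<Rightarrow> ('c \<Rightarrow> 'k::finite) \<Rightarrow> ('k \<Rightarrow> real) \<Rightarrow> real^'m^'m" where
  "NN B g w = (\<Sum>l\<in>UNIV. w l *\<^sub>R (blk B g l ** transpose (blk B g l)))"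

definition simplex_wt :: "('k::finite \<Rightarrow> real) \<Rightarrow> bool" where
  "simplex_wt w \<longleftrightarrow> (\<forall>l. w l \<ge> 0) \<and> (\<Sum>l\<in>UNIV. w l) = 1"

definition pinv :: "real^'n^'m \<Rightarrow> real^'m^'n" where
  "pinv A = (THE X. A ** X ** A = A \<and> X ** A ** X = X \<and>
                    transpose (A ** X) = A ** X \<and> transpose (X ** A) = X ** A)"

definition lambda_max :: "real^'n^'n \<Rightarrow> real" where
  "lambda_max A = Max {l. \<exists>v. v \<noteq> 0 \<and> A *v v = l *\<^sub>R v}"

definition Emat :: "'m \<Rightarrow> 'm \<Rightarrow> real^2^'m" where
  "Emat j k = (\<chi> a b. if b = 1 then (if a = j then 1 else 0) else (if a = k then 1 else 0))"

definition wplus :: "real^'c^'m \<Rightarrow> ('c::finite \<Rightarrow> 'k::finite) \<Rightarrow> 'm \<Rightarrow> 'k \<Rightarrow> real" where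
  "wplus B g j = (let h = pinv B *v axis j 1;
                      nrm = (\<lambda>l. sqrt (\<Sum>c\<in>{c. g c = l}. (h$c)^2))
                  in (\<lambda>l. nrm l / (\<Sum>t\<in>UNIV. nrm t)))"

definition is_wstar :: "real^'c^'m \<Rightarrow> ('c \<Rightarrow> 'k::finite) \<Rightarrow> 'm \<Rightarrow> ('k \<Rightarrow> real) \<Rightarrow> bool" where
  "is_wstar B g j w \<longleftrightarrow> simplex_wt w \<and> axis j 1 \<in> range (\<lambda>x. NN B g w *v x) \<and>
     (\<forall>w'. simplex_wt w' \<and> axis j 1 \<in> range (\<lambda>x. NN B g w' *v x) \<longrightarrow>
        axis j 1 \<bullet> (pinv (NN B g w) *v axis j 1) \<le> axis j 1 \<bullet> (pinv (NN B g w') *v axis j 1))"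

end

theory Submission
  imports Defs
begin

text \<open>
  For an optimal design write \<open>\<Sigma> = M(d)\<^sup>-\<^sup>1\<close>. Since \<open>\<Sigma> = \<Sigma> M(d) \<Sigma>\<close>, it is a nonnegative
  combination \<open>\<Sum>\<^sub>i d\<^sub>i u\<^sub>i u\<^sub>i'\<close> of rank-one matrices, and so is
  \<open>N(w) = \<Sum>\<^sub>c w(g c) b\<^sub>c b\<^sub>c'\<close> (\<open>b\<^sub>c\<close> the columns of \<open>B\<close>). Cauchy-Schwarz gives
  \<open>(N y)' \<Sigma> (N y) \<le> tr(N \<Sigma>) y' N y\<close>, and \<open>tr(N(w) \<Sigma>) \<le> (\<Sum>\<^sub>l w\<^sub>l) \<Phi>(M(d)) \<le> (\<Sum>\<^sub>l w\<^sub>l) \<alpha>\<close>.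
  If \<open>e\<^sub>j\<close> and \<open>e\<^sub>k\<close> lie in the column space of \<open>N\<close>, so does \<open>x = (e\<^sub>j \<plusminus> e\<^sub>k)/2 = N y\<close>, and
  for a symmetric generalized inverse \<open>X\<close> of \<open>N\<close> we have
  \<open>y' N y = x' X x \<le> \<lambda>max(E\<^sub>j\<^sub>k' X E\<^sub>j\<^sub>k) / 2\<close>. The two resulting bounds on \<open>x' \<Sigma> x \<ge> 0\<close>
  bound \<open>|\<Sigma>\<^sub>j\<^sub>k|\<close>. The three estimates are the cases \<open>N = B B' = N(1)\<close> with \<open>X = (B B')\<^sup>-\<^sup>1\<close>,
  and \<open>N = N(w)\<close> with \<open>X = N\<^sup>+\<close> for the two averaged weights.
\<close>

lemma matrix_diff_ldistrib: "(A::real^'n^'m) ** (B - C) = A ** B - A ** C"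
  by (simp add: matrix_eq matrix_vector_mul_assoc[symmetric] matrix_vector_mult_diff_rdistrib
      matrix_vector_mult_diff_distrib)

lemma matrix_diff_rdistrib: "((A::real^'n^'m) - B) ** C = A ** C - B ** C"
  by (simp add: matrix_eq matrix_vector_mul_assoc[symmetric] matrix_vector_mult_diff_rdistrib)

lemma matrix_add_rdistrib: "((A::real^'n^'m) + B) ** C = A ** C + B ** C"
  by (simp add: matrix_eq matrix_vector_mul_assoc[symmetric] matrix_vector_mult_add_rdistrib)

lemma transpose_add: "transpose ((A::real^'n^'m) + B) = transpose A + transpose B"
  by (simp add: transpose_def vec_eq_iff)

lemma transpose_diff: "transpose ((A::real^'n^'m) - B) = transpose A - transpose B"
  by (simp add: transpose_def vec_eq_iff)

lemma transpose_zero: "transpose (0::real^'n^'m) = 0"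
  by (simp add: transpose_def vec_eq_iff)

lemma transpose_sum: "transpose (\<Sum>i\<in>S. (M i::real^'n^'m)) = (\<Sum>i\<in>S. transpose (M i))"
  by (induction S rule: infinite_finite_induct) (auto simp: transpose_add transpose_def vec_eq_iff)

lemma matrix_vector_mult_sum: "(\<Sum>i\<in>S. M i) *v (v::real^'n) = (\<Sum>i\<in>S. M i *v v)"
  by (induction S rule: infinite_finite_induct) (auto simp: matrix_vector_mult_add_rdistrib)

lemma scaleR_matrix_vector_mult: "(c *\<^sub>R (M::real^'n^'m)) *v v = c *\<^sub>R (M *v v)"
  by (simp add: matrix_vector_mult_def vec_eq_iff sum_distrib_left mult_ac)

lemma inner_transpose_matrix_vector: "(a::real^'n) \<bullet> (transpose E *v v) = (E *v a) \<bullet> v"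
  by (metis dot_lmul_matrix inner_commute transpose_matrix_vector)

lemma matrix_inv_inverse:
  fixes A :: "real^'n^'n"
  assumes "invertible A"
  shows "A ** matrix_inv A = mat 1" "matrix_inv A ** A = mat 1"
proof -
  have "\<exists>A'. A ** A' = mat 1 \<and> A' ** A = mat 1" using assms invertible_def by blast
  hence "A ** matrix_inv A = mat 1 \<and> matrix_inv A ** A = mat 1"
    unfolding matrix_inv_def by (rule someI_ex)
  thus "A ** matrix_inv A = mat 1" "matrix_inv A ** A = mat 1" by auto
qed

lemma invertible_if_kernel_trivial:
  fixes A :: "real^'n^'n"
  assumes "\<And>x. A *v x = 0 \<Longrightarrow> x = 0"
  shows "invertible A"
  using assms matrix_left_invertible_ker invertible_left_inverse by metis

lemma transpose_matrix_inv_symmetric: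
  fixes A :: "real^'n^'n"
  assumes "invertible A" "transpose A = A"
  shows "transpose (matrix_inv A) = matrix_inv A"
proof -
  have "transpose (matrix_inv A) ** A = mat 1"
    using matrix_inv_inverse(1)[OF assms(1)] assms(2) by (metis matrix_transpose_mul transpose_mat)
  hence "transpose (matrix_inv A) = (transpose (matrix_inv A) ** A) ** matrix_inv A"
    using matrix_inv_inverse(1)[OF assms(1)] by (metis matrix_mul_assoc matrix_mul_rid)
  thus ?thesis by (simp add: \<open>transpose (matrix_inv A) ** A = mat 1\<close>)
qed

lemma outer_mult_vector: "outer x *v v = (x \<bullet> v) *\<^sub>R x"
  by (simp add: outer_def matrix_vector_mult_def vec_eq_iff inner_vec_def sum_distrib_left mult_ac)

lemma transpose_outer: "transpose (outer x) = outer x"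
  by (simp add: outer_def transpose_def vec_eq_iff mult.commute)

section \<open>Moore-Penrose inverses of symmetric matrices\<close>

definition penrose :: "real^'n^'m \<Rightarrow> real^'m^'n \<Rightarrow> bool" where
  "penrose A X \<longleftrightarrow> A ** X ** A = A \<and> X ** A ** X = X \<and>
                    transpose (A ** X) = A ** X \<and> transpose (X ** A) = X ** A"

lemma penrose_unique:
  assumes X: "penrose A X" and Y: "penrose A Y"
  shows "X = Y"
proof -
  have X1: "A ** X ** A = A" and X2: "X ** A ** X = X" and X3: "transpose (A ** X) = A ** X"
    and X4: "transpose (X ** A) = X ** A" using X unfolding penrose_def by auto
  have Y1: "A ** Y ** A = A" and Y2: "Y ** A ** Y = Y" and Y3: "transpose (A ** Y) = A ** Y"
    and Y4: "transpose (Y ** A) = Y ** A" using Y unfolding penrose_def by auto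
  have "X = X ** transpose (A ** X)" using X2 X3 by (simp add: matrix_mul_assoc)
  also have "\<dots> = X ** (transpose X ** transpose (A ** Y ** A))"
    using Y1 by (simp add: matrix_transpose_mul)
  finally have "X = X ** (transpose (A ** X) ** transpose (A ** Y))"
    by (simp add: matrix_transpose_mul matrix_mul_assoc)
  also have "\<dots> = X ** A ** Y" using X2 X3 Y3 by (simp add: matrix_mul_assoc)
  finally have XAY: "X = X ** A ** Y" .
  have "Y = transpose (Y ** A) ** Y" using Y2 Y4 by (simp add: matrix_mul_assoc)
  also have "\<dots> = transpose (A ** X ** A) ** transpose Y ** Y"
    using X1 by (simp add: matrix_transpose_mul)
  finally have "Y = (transpose (X ** A) ** transpose (Y ** A)) ** Y"
    by (simp add: matrix_transpose_mul matrix_mul_assoc)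
  also have "\<dots> = X ** (A ** Y ** A) ** Y" using X4 Y4 by (simp add: matrix_mul_assoc)
  also have "\<dots> = X ** A ** Y" using Y1 Y2 by (simp add: matrix_mul_assoc)
  finally show ?thesis using XAY by simp
qed

lemma pinv_eqI: "penrose A X \<Longrightarrow> pinv A = X"
  unfolding pinv_def
  by (rule the_equality) (auto simp: penrose_def[symmetric] intro: penrose_unique)

lemma orthogonal_projector_exists:
  fixes S :: "(real^'n) set"
  assumes "subspace S"
  obtains Q :: "real^'n^'n"
  where "transpose Q = Q" "\<And>v. Q *v v \<in> S" "\<And>v. v \<in> S \<Longrightarrow> Q *v v = v"
proof -
  obtain Bs where Bs: "Bs \<subseteq> S" "pairwise orthogonal Bs" "\<And>x. x \<in> Bs \<Longrightarrow> norm x = 1"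
    "independent Bs" "span Bs = S"
    using orthonormal_basis_subspace[OF assms] by metis
  have fin: "finite Bs" using Bs(4) independent_imp_finite by blast
  define Q where "Q = (\<Sum>b\<in>Bs. outer b)"
  have Qv: "Q *v v = (\<Sum>b\<in>Bs. (v \<bullet> b) *\<^sub>R b)" for v
    by (simp add: Q_def matrix_vector_mult_sum outer_mult_vector inner_commute)
  show thesis
  proof
    show "transpose Q = Q" by (simp add: Q_def transpose_sum transpose_outer)
    show "Q *v v \<in> S" for v
      unfolding Qv Bs(5)[symmetric] by (intro span_sum span_mul span_base)
    show "Q *v v = v" if "v \<in> S" for v
      unfolding Qv using that Bs(5) by (intro orthonormal_basis_expand[OF Bs(2,3) _ fin]) auto
  qed
qed

lemma penrose_inverse_from_kernel_projector:
  fixes A Q :: "real^'n^'n"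
  assumes sym: "transpose A = A" and Qt: "transpose Q = Q" and QQ: "Q ** Q = Q"
    and AQ: "A ** Q = 0" and QA: "Q ** A = 0" and Cinv: "invertible (A + Q)"
  defines "X \<equiv> matrix_inv (A + Q) - Q"
  shows "penrose A X" and "transpose X = X"
proof -
  define C where "C = A + Q"
  define Ci where "Ci = matrix_inv C"
  have CCi: "C ** Ci = mat 1" "Ci ** C = mat 1"
    using matrix_inv_inverse[OF Cinv] by (auto simp: Ci_def C_def)
  have Cit: "transpose Ci = Ci"
    using transpose_matrix_inv_symmetric[OF Cinv] by (simp add: Ci_def C_def transpose_add sym Qt)
  have QC: "Q ** C = Q" by (simp add: C_def matrix_add_ldistrib QA QQ)
  have CQ: "C ** Q = Q" by (simp add: C_def matrix_add_rdistrib AQ QQ)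
  have QCi: "Q ** Ci = Q" by (metis QC CCi(1) matrix_mul_assoc matrix_mul_rid)
  have CiQ: "Ci ** Q = Q" by (metis CQ CCi(2) matrix_mul_assoc matrix_mul_lid)
  have A: "A = C - Q" and X: "X = Ci - Q" by (simp_all add: C_def Ci_def X_def)
  have AX: "A ** X = mat 1 - Q"
  proof -
    have "A ** X = (C - Q) ** Ci - (C - Q) ** Q" by (simp only: A X matrix_diff_ldistrib)
    also have "\<dots> = mat 1 - Q" by (simp add: matrix_diff_rdistrib CCi CQ QCi QQ)
    finally show ?thesis .
  qed
  have XA: "X ** A = mat 1 - Q"
  proof -
    have "X ** A = Ci ** (C - Q) - Q ** (C - Q)" by (simp only: A X matrix_diff_rdistrib)
    also have "\<dots> = mat 1 - Q" by (simp add: matrix_diff_ldistrib CCi QC CiQ QQ)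
    finally show ?thesis .
  qed
  have QX: "Q ** X = 0" by (simp add: X matrix_diff_ldistrib QCi QQ)
  show "penrose A X"
    unfolding penrose_def
  proof (intro conjI)
    show "A ** X ** A = A" by (simp add: AX matrix_diff_rdistrib QA)
    show "X ** A ** X = X" by (simp only: XA matrix_diff_rdistrib QX) simp
    show "transpose (A ** X) = A ** X" by (simp add: AX transpose_diff Qt)
    show "transpose (X ** A) = X ** A" by (simp add: XA transpose_diff Qt)
  qed
  show "transpose X = X" by (simp add: X transpose_diff Cit Qt)
qed

lemma penrose_inverse_symmetric_exists:
  fixes A :: "real^'n^'n"
  assumes sym: "transpose A = A"
  shows "\<exists>X. penrose A X \<and> transpose X = X"
proof -
  have "subspace {v. A *v v = 0}"
    by (simp add: subspace_def matrix_vector_right_distrib matrix_vector_mult_scaleR)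
  then obtain Q where Qt: "transpose Q = Q" and Qker: "\<And>v. A *v (Q *v v) = 0"
    and Qid: "\<And>v. A *v v = 0 \<Longrightarrow> Q *v v = v"
    by (rule orthogonal_projector_exists) blast
  have AQ: "A ** Q = 0" using Qker by (simp add: matrix_eq matrix_vector_mul_assoc)
  have "transpose (Q ** A) = transpose 0" by (simp add: matrix_transpose_mul Qt sym AQ transpose_zero)
  hence QA: "Q ** A = 0" by (simp only: transpose_iff)
  have QQ: "Q ** Q = Q"
    unfolding matrix_eq by (simp add: Qker Qid flip: matrix_vector_mul_assoc)
  have "invertible (A + Q)"
  proof (rule invertible_if_kernel_trivial)
    fix v assume Cv: "(A + Q) *v v = 0"
    have "Q ** (A + Q) = Q" by (simp add: matrix_add_ldistrib QA QQ)
    hence "Q *v v = Q *v ((A + Q) *v v)" by (simp only: matrix_vector_mul_assoc)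
    hence "Q *v v = 0" by (simp only: Cv matrix_vector_mult_0_right)
    moreover have "A *v v = 0" using Cv \<open>Q *v v = 0\<close> by (simp add: matrix_vector_mult_add_rdistrib)
    ultimately show "v = 0" using Qid by metis
  qed
  thus ?thesis using penrose_inverse_from_kernel_projector[OF sym Qt QQ AQ QA] by blast
qed

lemma pinv_symmetric:
  fixes A :: "real^'n^'n"
  assumes "transpose A = A"
  shows "A ** pinv A ** A = A" "transpose (pinv A) = pinv A"
  using penrose_inverse_symmetric_exists[OF assms] pinv_eqI by (auto simp: penrose_def)

section \<open>Nonnegative sums of rank-one matrices\<close>

definition outer_sum :: "('i::finite \<Rightarrow> real) \<Rightarrow> ('i \<Rightarrow> real^'m) \<Rightarrow> real^'m^'m" where
  "outer_sum w u = (\<Sum>i\<in>UNIV. w i *\<^sub>R outer (u i))"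

lemma outer_sum_mult_vector: "outer_sum w u *v x = (\<Sum>i\<in>UNIV. (w i * (u i \<bullet> x)) *\<^sub>R u i)"
  by (simp add: outer_sum_def matrix_vector_mult_sum scaleR_matrix_vector_mult outer_mult_vector)

lemma inner_outer_sum: "x \<bullet> (outer_sum w u *v x) = (\<Sum>i\<in>UNIV. w i * (u i \<bullet> x)\<^sup>2)"
  by (simp add: outer_sum_mult_vector inner_sum_right power2_eq_square inner_commute mult_ac)

lemma inner_outer_sum_nonneg: "(\<And>i. w i \<ge> 0) \<Longrightarrow> x \<bullet> (outer_sum w u *v x) \<ge> 0"
  by (simp add: inner_outer_sum sum_nonneg)

lemma transpose_outer_sum: "transpose (outer_sum w u) = outer_sum w u"
  by (simp add: outer_sum_def transpose_sum transpose_scalar transpose_outer)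

lemma trace_mult_sum: "trace ((A::real^'n^'n) ** (\<Sum>i\<in>I. M i)) = (\<Sum>i\<in>I. trace (A ** M i))"
  by (induction I rule: infinite_finite_induct)
    (auto simp: matrix_add_ldistrib trace_add trace_0[simplified])

lemma trace_mult_scaleR: "trace ((A::real^'n^'n) ** (c *\<^sub>R M)) = c * trace (A ** M)"
  by (simp add: trace_def matrix_matrix_mult_def sum_distrib_left mult_ac)

lemma trace_mult_outer_sum:
  "trace (A ** outer_sum w u) = (\<Sum>i\<in>UNIV. w i * (u i \<bullet> (A *v u i)))"
proof -
  have "trace (A ** (c *\<^sub>R outer x)) = c * (x \<bullet> (A *v x))" for c x
    by (simp add: trace_def outer_def matrix_matrix_mult_def matrix_vector_mult_def inner_vec_def
        sum_distrib_left sum_distrib_right mult_ac)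
  thus ?thesis
    by (simp add: outer_sum_def trace_mult_sum)
qed

lemma trace_outer_sum_mult_nonneg:
  assumes "\<And>c. w c \<ge> 0" "\<And>i. d i \<ge> 0"
  shows "trace (outer_sum w b ** outer_sum d u) \<ge> 0"
  unfolding trace_mult_outer_sum using assms by (intro sum_nonneg mult_nonneg_nonneg inner_outer_sum_nonneg)

lemma inner_outer_sum_mult_le_trace:
  fixes u :: "'i::finite \<Rightarrow> real^'m" and b :: "'c::finite \<Rightarrow> real^'m"
  assumes d: "\<And>i. d i \<ge> 0" and w: "\<And>c. w c \<ge> 0"
  defines "S \<equiv> outer_sum d u" and "N \<equiv> outer_sum w b"
  shows "(N *v y) \<bullet> (S *v (N *v y)) \<le> trace (N ** S) * (y \<bullet> (N *v y))"
proof -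
  define p where "p c = b c \<bullet> y" for c
  define q where "q i c = b c \<bullet> u i" for i c
  have tr: "trace (N ** S) = (\<Sum>i\<in>UNIV. d i * (\<Sum>c\<in>UNIV. w c * (q i c)\<^sup>2))"
    unfolding S_def N_def trace_mult_outer_sum inner_outer_sum q_def ..
  have yNy: "y \<bullet> (N *v y) = (\<Sum>c\<in>UNIV. w c * (p c)\<^sup>2)"
    unfolding N_def inner_outer_sum p_def ..
  have uNy: "u i \<bullet> (N *v y) = (\<Sum>c\<in>UNIV. w c * p c * q i c)" for i
    unfolding N_def outer_sum_mult_vector p_def q_def by (simp add: inner_sum_right inner_commute mult_ac)
  have lhs: "(N *v y) \<bullet> (S *v (N *v y)) = (\<Sum>i\<in>UNIV. d i * (\<Sum>c\<in>UNIV. w c * p c * q i c)\<^sup>2)"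
    unfolding S_def inner_outer_sum uNy ..
  have cs: "(\<Sum>c\<in>UNIV. w c * p c * q i c)\<^sup>2
      \<le> (\<Sum>c\<in>UNIV. w c * (q i c)\<^sup>2) * (\<Sum>c\<in>UNIV. w c * (p c)\<^sup>2)" for i
  proof -
    have "(\<Sum>c\<in>UNIV. (sqrt (w c) * p c) * (sqrt (w c) * q i c))\<^sup>2
          \<le> (\<Sum>c\<in>UNIV. (sqrt (w c) * p c)\<^sup>2) * (\<Sum>c\<in>UNIV. (sqrt (w c) * q i c)\<^sup>2)"
      by (rule Cauchy_Schwarz_ineq_sum)
    moreover have "(sqrt (w c) * p c) * (sqrt (w c) * q i c) = w c * p c * q i c"
      and "(sqrt (w c) * p c)\<^sup>2 = w c * (p c)\<^sup>2" and "(sqrt (w c) * q i c)\<^sup>2 = w c * (q i c)\<^sup>2" for c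
      using w[of c] by (auto simp: algebra_simps power_mult_distrib)
    ultimately show ?thesis by (simp only: mult.commute)
  qed
  have "(N *v y) \<bullet> (S *v (N *v y))
      \<le> (\<Sum>i\<in>UNIV. d i * ((\<Sum>c\<in>UNIV. w c * (q i c)\<^sup>2) * (\<Sum>c\<in>UNIV. w c * (p c)\<^sup>2)))"
    unfolding lhs by (intro sum_mono mult_left_mono cs d)
  also have "\<dots> = trace (N ** S) * (y \<bullet> (N *v y))"
    unfolding tr yNy by (simp only: sum_distrib_right mult.assoc)
  finally show ?thesis .
qed

lemma in_range_if_orthogonal_kernel:
  fixes N :: "real^'m^'m"
  assumes sym: "transpose N = N" and orth: "\<And>z. N *v z = 0 \<Longrightarrow> v \<bullet> z = 0"
  shows "v \<in> range (\<lambda>x. N *v x)"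
proof -
  obtain X where "penrose N X" "transpose X = X" using penrose_inverse_symmetric_exists[OF sym] by blast
  hence NXN: "N ** X ** N = N" and NX: "transpose (N ** X) = N ** X" unfolding penrose_def by auto
  define r where "r = v - N *v (X *v v)"
  have "N ** (N ** X) = N ** X ** N"
    by (metis NX matrix_transpose_mul sym \<open>transpose X = X\<close> matrix_mul_assoc)
  hence "N *v r = 0"
    by (simp add: r_def matrix_vector_mult_diff_distrib matrix_vector_mul_assoc NXN)
  moreover have "(N *v (X *v v)) \<bullet> r = (X *v v) \<bullet> (transpose N *v r)"
    by (rule inner_transpose_matrix_vector[symmetric])
  ultimately have "v \<bullet> r = 0" and "(N *v (X *v v)) \<bullet> r = 0" using orth sym by auto
  hence "r \<bullet> r = 0" by (simp add: r_def inner_diff_left)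
  hence "v = N *v (X *v v)" by (simp add: r_def)
  thus ?thesis by blast
qed

lemma outer_sum_kernel:
  assumes "\<And>i. w i \<ge> 0" "outer_sum w u *v z = 0" "w i > 0"
  shows "u i \<bullet> z = 0"
proof -
  have "(\<Sum>i\<in>UNIV. w i * (u i \<bullet> z)\<^sup>2) = 0" using assms(2) inner_outer_sum[of z w u] by simp
  hence "w i * (u i \<bullet> z)\<^sup>2 = 0" using assms(1) by (subst (asm) sum_nonneg_eq_0_iff) auto
  thus ?thesis using assms(3) by simp
qed

lemma range_outer_sum_mono:
  assumes w: "\<And>i. w i \<ge> 0" and w': "\<And>i. w' i \<ge> 0" and pos: "\<And>i. w' i > 0 \<Longrightarrow> w i > 0"
    and v: "v \<in> range (\<lambda>x. outer_sum w' u *v x)"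
  shows "v \<in> range (\<lambda>x. outer_sum w u *v x)"
proof (rule in_range_if_orthogonal_kernel[OF transpose_outer_sum])
  fix z assume z: "outer_sum w u *v z = 0"
  have "(w' i * (u i \<bullet> z)) *\<^sub>R u i = 0" for i
    using outer_sum_kernel[OF w z pos, of i] w'[of i] by (cases "w' i > 0") auto
  hence "outer_sum w' u *v z = 0" unfolding outer_sum_mult_vector by (intro sum.neutral) auto
  moreover obtain y where "v = outer_sum w' u *v y" using v by blast
  ultimately show "v \<bullet> z = 0"
    by (metis inner_transpose_matrix_vector transpose_outer_sum inner_zero_right)
qed

lemma mult_in_range_outer_sum_columns:
  fixes B :: "real^'c::finite^'m"
  assumes w: "\<And>c. w c \<ge> 0" and h: "\<And>c. h$c \<noteq> 0 \<Longrightarrow> w c > 0"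
  shows "B *v h \<in> range (\<lambda>x. outer_sum w (\<lambda>c. column c B) *v x)"
proof (rule in_range_if_orthogonal_kernel[OF transpose_outer_sum])
  fix z assume z: "outer_sum w (\<lambda>c. column c B) *v z = 0"
  have "h$c * (column c B \<bullet> z) = 0" for c
    using outer_sum_kernel[OF w z h, of c] by (cases "h$c = 0") auto
  hence "(\<Sum>c\<in>UNIV. h$c * (column c B \<bullet> z)) = 0" by (intro sum.neutral) auto
  thus "(B *v h) \<bullet> z = 0"
    by (simp add: matrix_mult_sum inner_sum_left scalar_mult_eq_scaleR)
qed

section \<open>The largest eigenvalue of a symmetric 2 x 2 matrix\<close>

lemma matrix_vector_mult_2x2:
  "(P::real^2^2) *v v = vector [P$1$1 * v$1 + P$1$2 * v$2, P$2$1 * v$1 + P$2$2 * v$2]"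
  by (simp add: vec_eq_iff forall_2 matrix_vector_mult_def sum_2)

lemma inner_2: "(u::real^2) \<bullet> v = u$1 * v$1 + u$2 * v$2"
  by (simp add: inner_vec_def sum_2)

lemma symmetric_2x2_entry: "transpose (P::real^2^2) = P \<Longrightarrow> P$2$1 = P$1$2"
  by (drule arg_cong[where f = "\<lambda>M. M$1$2"]) (simp add: transpose_def)

definition top_eigenvalue2 :: "real^2^2 \<Rightarrow> real" where
  "top_eigenvalue2 P = (P$1$1 + P$2$2) / 2 + sqrt (((P$1$1 - P$2$2) / 2)\<^sup>2 + (P$1$2)\<^sup>2)"

lemma top_eigenvalue2_shifts:
  fixes P :: "real^2^2"
  defines "L \<equiv> top_eigenvalue2 P"
  shows "L - P$1$1 \<ge> 0" "L - P$2$2 \<ge> 0" "(L - P$1$1) * (L - P$2$2) = (P$1$2)\<^sup>2"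
proof -
  define t where "t = (P$1$1 - P$2$2) / 2"
  define s where "s = sqrt (t\<^sup>2 + (P$1$2)\<^sup>2)"
  have La: "L - P$1$1 = s - t" and Lc: "L - P$2$2 = s + t"
    unfolding L_def top_eigenvalue2_def s_def t_def by (simp_all add: field_simps)
  have "\<bar>t\<bar> = sqrt (t\<^sup>2)" by simp
  also have "\<dots> \<le> s" unfolding s_def by (rule real_sqrt_le_mono) simp
  finally show "L - P$1$1 \<ge> 0" "L - P$2$2 \<ge> 0" unfolding La Lc by auto
  have "(s - t) * (s + t) = s\<^sup>2 - t\<^sup>2" by (simp add: power2_eq_square algebra_simps)
  thus "(L - P$1$1) * (L - P$2$2) = (P$1$2)\<^sup>2" unfolding La Lc by (simp add: s_def)
qed

lemma eigenvalue_symmetric_2x2: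
  fixes P :: "real^2^2"
  assumes sym: "transpose P = P" and v: "v \<noteq> 0" "P *v v = l *\<^sub>R v"
  shows "l = top_eigenvalue2 P \<or> l = P$1$1 + P$2$2 - top_eigenvalue2 P"
proof -
  define a b c where "a = P$1$1" "b = P$1$2" "c = P$2$2"
  define s where "s = sqrt (((a - c) / 2)\<^sup>2 + b\<^sup>2)"
  have e1: "a * v$1 + b * v$2 = l * v$1" and e2: "b * v$1 + c * v$2 = l * v$2"
    using v(2) symmetric_2x2_entry[OF sym]
    by (simp_all add: matrix_vector_mult_2x2 vec_eq_iff forall_2 a_b_c_def)
  have "((a - l) * (c - l) - b\<^sup>2) * v$1 = 0" and "((a - l) * (c - l) - b\<^sup>2) * v$2 = 0"
    using e1 e2 by algebra+
  moreover have "v$1 \<noteq> 0 \<or> v$2 \<noteq> 0" using v(1) by (auto simp: vec_eq_iff forall_2)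
  ultimately have det: "(a - l) * (c - l) = b\<^sup>2" by auto
  have "(l - (a + c) / 2)\<^sup>2 - ((a - c) / 2)\<^sup>2 = (a - l) * (c - l)"
    by (simp add: power2_eq_square field_simps)
  hence "(l - (a + c) / 2)\<^sup>2 = s\<^sup>2" using det by (simp add: s_def)
  hence "l - (a + c) / 2 = s \<or> l - (a + c) / 2 = - s" by (simp add: power2_eq_iff)
  hence "l = (a + c) / 2 + s \<or> l = a + c - ((a + c) / 2 + s)" by (auto simp: field_simps)
  moreover have "top_eigenvalue2 P = (a + c) / 2 + s" by (simp add: top_eigenvalue2_def a_b_c_def s_def)
  ultimately show ?thesis by (simp add: a_b_c_def)
qed

lemma top_eigenvalue2_is_eigenvalue:
  fixes P :: "real^2^2"
  assumes sym: "transpose P = P"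
  shows "\<exists>v. v \<noteq> 0 \<and> P *v v = top_eigenvalue2 P *\<^sub>R v"
proof -
  define a b c L where "a = P$1$1" "b = P$1$2" "c = P$2$2" "L = top_eigenvalue2 P"
  have Pv: "P *v v = vector [a * v$1 + b * v$2, b * v$1 + c * v$2]" for v
    by (simp add: matrix_vector_mult_2x2 symmetric_2x2_entry[OF sym] a_b_c_L_def)
  have "(L - a) * (L - c) = b\<^sup>2" using top_eigenvalue2_shifts(3) by (simp add: a_b_c_L_def)
  hence ev1: "P *v vector [b, L - a] = L *\<^sub>R vector [b, L - a]"
    and ev2: "P *v vector [L - c, b] = L *\<^sub>R vector [L - c, b]"
    by (simp_all add: Pv vec_eq_iff forall_2 algebra_simps power2_eq_square)
  consider "b \<noteq> 0 \<or> L \<noteq> a" | "L \<noteq> c" | "b = 0" "L = a" "L = c" by blast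
  thus ?thesis
  proof cases
    case 1
    hence "vector [b, L - a] \<noteq> (0::real^2)" by (auto simp: vec_eq_iff forall_2)
    thus ?thesis using ev1 a_b_c_L_def(4) by blast
  next
    case 2
    hence "vector [L - c, b] \<noteq> (0::real^2)" by (auto simp: vec_eq_iff forall_2)
    thus ?thesis using ev2 a_b_c_L_def(4) by blast
  next
    case 3
    hence "P *v vector [1, 0] = L *\<^sub>R vector [1, 0]" by (simp add: Pv vec_eq_iff forall_2)
    moreover have "vector [1, 0] \<noteq> (0::real^2)" by (auto simp: vec_eq_iff forall_2)
    ultimately show ?thesis using a_b_c_L_def(4) by blast
  qed
qed

lemma lambda_max_symmetric_2x2:
  fixes P :: "real^2^2"
  assumes sym: "transpose P = P"
  shows "lambda_max P = top_eigenvalue2 P"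
proof -
  define E where "E = {l. \<exists>v. v \<noteq> 0 \<and> P *v v = l *\<^sub>R v}"
  have E: "E \<subseteq> {top_eigenvalue2 P, P$1$1 + P$2$2 - top_eigenvalue2 P}"
    using eigenvalue_symmetric_2x2[OF sym] by (auto simp: E_def)
  have "P$1$1 + P$2$2 - top_eigenvalue2 P \<le> top_eigenvalue2 P"
    using top_eigenvalue2_shifts(1,2)[of P] by linarith
  hence "l \<le> top_eigenvalue2 P" if "l \<in> E" for l using E that by auto
  moreover have "top_eigenvalue2 P \<in> E" using top_eigenvalue2_is_eigenvalue[OF sym] by (simp add: E_def)
  ultimately show ?thesis
    unfolding lambda_max_def E_def[symmetric] using finite_subset[OF E] by (intro Max_eqI) auto
qed

lemma quad_form_le_lambda_max_2x2:
  fixes P :: "real^2^2"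
  assumes sym: "transpose P = P"
  shows "w \<bullet> (P *v w) \<le> lambda_max P * (w \<bullet> w)"
proof -
  define a b c L where "a = P$1$1" "b = P$1$2" "c = P$2$2" "L = top_eigenvalue2 P"
  have p: "L - a \<ge> 0" and q: "L - c \<ge> 0" and pq: "(L - a) * (L - c) = b\<^sup>2"
    using top_eigenvalue2_shifts[of P] by (simp_all add: a_b_c_L_def)
  \<comment> \<open>\<open>L |w|\<^sup>2 - w \<bullet> P w\<close> is a binary quadratic form with nonnegative diagonal and discriminant zero.\<close>
  have "0 \<le> (L - a) * (w$1)\<^sup>2 - 2 * b * w$1 * w$2 + (L - c) * (w$2)\<^sup>2"
  proof (cases "L = a")
    case True
    thus ?thesis using pq q by simp
  next
    case False
    have "(L - a) * ((L - a) * (w$1)\<^sup>2 - 2 * b * w$1 * w$2 + (L - c) * (w$2)\<^sup>2)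
        = ((L - a) * w$1)\<^sup>2 - 2 * b * ((L - a) * w$1) * w$2 + ((L - a) * (L - c)) * (w$2)\<^sup>2"
      by (simp add: algebra_simps power2_eq_square)
    also have "\<dots> = ((L - a) * w$1 - b * w$2)\<^sup>2"
      unfolding pq by (simp add: algebra_simps power2_eq_square)
    finally have "(L - a) * ((L - a) * (w$1)\<^sup>2 - 2 * b * w$1 * w$2 + (L - c) * (w$2)\<^sup>2)
        = ((L - a) * w$1 - b * w$2)\<^sup>2" .
    hence "0 \<le> (L - a) * ((L - a) * (w$1)\<^sup>2 - 2 * b * w$1 * w$2 + (L - c) * (w$2)\<^sup>2)" by simp
    moreover have "L - a > 0" using p False by simp
    ultimately show ?thesis by (simp add: zero_le_mult_iff)
  qed
  hence "w \<bullet> (P *v w) \<le> L * (w \<bullet> w)"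
    by (simp add: matrix_vector_mult_2x2 inner_2 symmetric_2x2_entry[OF sym] a_b_c_L_def
        algebra_simps power2_eq_square)
  thus ?thesis by (simp add: lambda_max_symmetric_2x2[OF sym] a_b_c_L_def(4))
qed

section \<open>Off-diagonal entries of a sum of rank-one matrices\<close>

lemma Emat_mult_vector:
  "j \<noteq> k \<Longrightarrow> Emat j k *v vector [a, b] = a *\<^sub>R axis j 1 + b *\<^sub>R axis k (1::real)"
  by (simp add: vec_eq_iff Emat_def matrix_vector_mult_def sum_2 axis_def)

lemma matrix_vector_mult_axis_nth: "((S::real^'m^'m) *v axis k 1)$j = S$j$k"
  unfolding matrix_vector_mult_def axis_def
  by (simp add: if_distrib[where f="\<lambda>x. _ * x"] cong: if_cong)

lemma inner_axis_pair:
  "(a *\<^sub>R axis j 1 + b *\<^sub>R axis k 1) \<bullet> ((S::real^'m^'m) *v (a *\<^sub>R axis j 1 + b *\<^sub>R axis k 1))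
   = a\<^sup>2 * S$j$j + a * b * (S$j$k + S$k$j) + b\<^sup>2 * S$k$k"
  by (simp add: inner_add_left inner_add_right matrix_vector_right_distrib matrix_vector_mult_scaleR
      inner_axis' matrix_vector_mult_axis_nth algebra_simps power2_eq_square)

lemma abs_entry_le_if_quad_bounds:
  fixes S :: "real^'m^'m"
  assumes sym: "transpose S = S"
    and bounds: "\<And>s. s = 1 \<or> s = -1 \<Longrightarrow>
      0 \<le> ((1/2) *\<^sub>R axis j 1 + (s/2) *\<^sub>R axis k 1) \<bullet> (S *v ((1/2) *\<^sub>R axis j 1 + (s/2) *\<^sub>R axis k 1))
      \<and> ((1/2) *\<^sub>R axis j 1 + (s/2) *\<^sub>R axis k 1) \<bullet> (S *v ((1/2) *\<^sub>R axis j 1 + (s/2) *\<^sub>R axis k 1)) \<le> c"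
  shows "\<bar>S$j$k\<bar> \<le> c"
proof -
  have "S$k$j = S$j$k" using arg_cong[OF sym, of "\<lambda>M. M$j$k"] by (simp add: transpose_def)
  hence "0 \<le> (S$j$j + s * 2 * S$j$k + S$k$k) / 4 \<and> (S$j$j + s * 2 * S$j$k + S$k$k) / 4 \<le> c"
    if "s = 1 \<or> s = -1" for s
    using bounds[OF that] that unfolding inner_axis_pair by (auto simp: power2_eq_square)
  from this[of 1] this[of "-1"] show ?thesis by auto
qed

lemma quad_le_trace_mult_ginverse:
  fixes u :: "'i::finite \<Rightarrow> real^'m" and b :: "'c::finite \<Rightarrow> real^'m" and X :: "real^'m^'m"
  assumes d: "\<And>i. d i \<ge> 0" and w: "\<And>c. w c \<ge> 0"
    and NXN: "outer_sum w b ** X ** outer_sum w b = outer_sum w b" and Xsym: "transpose X = X"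
    and x: "x = outer_sum w b *v y"
  shows "x \<bullet> (outer_sum d u *v x) \<le> trace (outer_sum w b ** outer_sum d u) * (x \<bullet> (X *v x))"
    and "x \<bullet> (X *v x) \<ge> 0"
proof -
  let ?N = "outer_sum w b"
  \<comment> \<open>Since \<open>X\<close> is a symmetric generalized inverse of \<open>N\<close>, \<open>y \<bullet> N y = x \<bullet> X x\<close> for \<open>x = N y\<close>.\<close>
  have "y \<bullet> (?N *v y) = y \<bullet> (transpose ?N *v (X *v x))"
    by (simp add: x transpose_outer_sum matrix_vector_mul_assoc matrix_mul_assoc NXN)
  also have "\<dots> = x \<bullet> (X *v x)" by (simp only: inner_transpose_matrix_vector x)
  finally have yNy: "y \<bullet> (?N *v y) = x \<bullet> (X *v x)" .
  show "x \<bullet> (outer_sum d u *v x) \<le> trace (?N ** outer_sum d u) * (x \<bullet> (X *v x))"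
    unfolding yNy[symmetric] unfolding x by (intro inner_outer_sum_mult_le_trace d w)
  have "y \<bullet> (?N *v y) \<ge> 0" by (intro inner_outer_sum_nonneg w)
  thus "x \<bullet> (X *v x) \<ge> 0" by (simp only: yNy)
qed

lemma abs_outer_sum_entry_le_lambda_max:
  fixes u :: "'i::finite \<Rightarrow> real^'m" and b :: "'c::finite \<Rightarrow> real^'m" and X :: "real^'m^'m"
  assumes d: "\<And>i. d i \<ge> 0" and w: "\<And>c. w c \<ge> 0"
    and NXN: "outer_sum w b ** X ** outer_sum w b = outer_sum w b" and Xsym: "transpose X = X"
    and ej: "axis j 1 \<in> range (\<lambda>x. outer_sum w b *v x)"
    and ek: "axis k 1 \<in> range (\<lambda>x. outer_sum w b *v x)"
    and jk: "j \<noteq> k" and T: "trace (outer_sum w b ** outer_sum d u) \<le> T"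
  shows "\<bar>outer_sum d u $ j $ k\<bar> \<le> T / 2 * lambda_max (transpose (Emat j k) ** X ** Emat j k)"
proof -
  let ?N = "outer_sum w b" and ?S = "outer_sum d u"
  let ?P = "transpose (Emat j k) ** X ** Emat j k"
  let ?R = "lambda_max ?P"
  have Psym: "transpose ?P = ?P" by (simp add: matrix_transpose_mul Xsym matrix_mul_assoc)
  obtain yj yk where yj: "axis j 1 = ?N *v yj" and yk: "axis k 1 = ?N *v yk" using ej ek by blast
  have "0 \<le> x \<bullet> (?S *v x) \<and> x \<bullet> (?S *v x) \<le> T / 2 * ?R"
    if "s = 1 \<or> s = -1" and x: "x = (1/2) *\<^sub>R axis j 1 + (s/2) *\<^sub>R axis k 1" for s x
  proof -
    define \<omega> where "\<omega> = (vector [1/2, s/2] :: real^2)"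
    have "x = ?N *v ((1/2) *\<^sub>R yj + (s/2) *\<^sub>R yk)"
      by (simp add: x yj yk matrix_vector_right_distrib matrix_vector_mult_scaleR)
    note quad = quad_le_trace_mult_ginverse(1)[where d=d and u=u, OF d w NXN Xsym this]
      quad_le_trace_mult_ginverse(2)[OF d w NXN Xsym this]
    have "x \<bullet> (X *v x) = \<omega> \<bullet> (?P *v \<omega>)"
      by (simp only: x \<omega>_def Emat_mult_vector[OF jk, symmetric] inner_transpose_matrix_vector
          matrix_vector_mul_assoc[symmetric])
    also have "\<dots> \<le> ?R * (\<omega> \<bullet> \<omega>)" by (rule quad_form_le_lambda_max_2x2[OF Psym])
    also have "\<omega> \<bullet> \<omega> = 1/2" using that by (auto simp: \<omega>_def inner_2)
    finally have xXx: "x \<bullet> (X *v x) \<le> ?R / 2" by simp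
    have "0 \<le> trace (?N ** ?S)" by (intro trace_outer_sum_mult_nonneg w d)
    hence "x \<bullet> (?S *v x) \<le> T * (x \<bullet> (X *v x))"
      using quad T by (meson mult_right_mono order_trans)
    also have "\<dots> \<le> T * (?R / 2)"
      using xXx T \<open>0 \<le> trace (?N ** ?S)\<close> by (intro mult_left_mono) auto
    finally show ?thesis using inner_outer_sum_nonneg[of d x u] d by simp
  qed
  thus ?thesis by (intro abs_entry_le_if_quad_bounds[OF transpose_outer_sum]) blast
qed

lemma is_design_nonneg: "is_design N d \<Longrightarrow> d i \<ge> 0"
proof -
  assume "is_design N d"
  hence "d i = 0 \<or> d i = 1" by (simp add: is_design_def)
  thus "d i \<ge> 0" by auto
qed

lemma info_mat_eq_outer_sum: "info_mat f d = outer_sum d f"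
  by (simp add: info_mat_def outer_sum_def)

lemma matrix_inv_outer_sum:
  fixes u :: "'i::finite \<Rightarrow> real^'m"
  assumes inv: "invertible (outer_sum d u)"
  defines "S \<equiv> matrix_inv (outer_sum d u)"
  shows "S = outer_sum d (\<lambda>i. S *v u i)"
proof -
  have Ssym: "transpose S = S"
    unfolding S_def by (rule transpose_matrix_inv_symmetric[OF inv transpose_outer_sum])
  have "S = S ** outer_sum d u ** S" by (simp add: S_def matrix_inv_inverse[OF inv])
  also have "\<dots> = outer_sum d (\<lambda>i. S *v u i)"
  proof (subst matrix_eq, intro allI)
    fix v
    have "u i \<bullet> (S *v v) = (S *v u i) \<bullet> v" for i
      using inner_transpose_matrix_vector[of "u i" S v] Ssym by simp
    thus "(S ** outer_sum d u ** S) *v v = outer_sum d (\<lambda>i. S *v u i) *v v"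
      by (simp add: outer_sum_mult_vector vec.sum matrix_vector_mult_scaleR
          flip: matrix_vector_mul_assoc)
  qed
  finally show ?thesis .
qed

lemma NN_eq_outer_sum: "NN B g w = outer_sum (\<lambda>c. w (g c)) (\<lambda>c. column c B)"
proof -
  have "NN B g w $ a $ b = (\<Sum>c\<in>UNIV. w (g c) * (B$a$c * B$b$c))" for a b
  proof -
    have "NN B g w $ a $ b = (\<Sum>l\<in>UNIV. \<Sum>c\<in>UNIV. if g c = l then w l * (B$a$c * B$b$c) else 0)"
      by (simp add: NN_def blk_def matrix_matrix_mult_def transpose_def sum_distrib_left if_distrib
          cong: if_cong)
    also have "\<dots> = (\<Sum>c\<in>UNIV. \<Sum>l\<in>UNIV. if g c = l then w l * (B$a$c * B$b$c) else 0)"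
      by (rule sum.swap)
    finally show ?thesis by (simp add: sum.delta)
  qed
  thus ?thesis by (simp add: vec_eq_iff outer_sum_def outer_def column_def)
qed

lemma transpose_NN: "transpose (NN B g w) = NN B g w"
  by (simp add: NN_eq_outer_sum transpose_outer_sum)

lemma mult_transpose_eq_NN_one: "B ** transpose B = NN B g (\<lambda>_. 1)"
  by (simp add: NN_eq_outer_sum outer_sum_def vec_eq_iff outer_def column_def
      matrix_matrix_mult_def transpose_def)

lemma trace_NN_mult_matrix_inv_le:
  assumes w: "\<And>l. w l \<ge> 0"
  shows "trace (NN B g w ** matrix_inv M) \<le> (\<Sum>l\<in>UNIV. w l) * PhiB B g M"
proof -
  have "trace (A ** (c *\<^sub>R (Bl ** transpose Bl))) = c * trace (transpose Bl ** A ** Bl)"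
    for A :: "real^'m^'m" and Bl :: "real^'c^'m" and c
    unfolding trace_mult_scaleR by (simp add: trace_mul_sym[of "A ** Bl"] matrix_mul_assoc)
  hence "trace (NN B g w ** matrix_inv M)
      = (\<Sum>l\<in>UNIV. w l * trace (transpose (blk B g l) ** matrix_inv M ** blk B g l))"
    unfolding NN_def trace_mul_sym[of _ "matrix_inv M"] trace_mult_sum by (rule sum.cong[OF refl])
  also have "\<dots> \<le> (\<Sum>l\<in>UNIV. w l * PhiB B g M)"
    unfolding PhiB_def by (intro sum_mono mult_left_mono w Max_ge) auto
  finally show ?thesis by (simp add: sum_distrib_right)
qed

lemma invertible_mult_transpose:
  fixes B :: "real^'c::finite^'m"
  assumes surj: "range (\<lambda>x. B *v x) = UNIV"
  shows "invertible (B ** transpose B)"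
proof (rule invertible_if_kernel_trivial)
  fix v assume "(B ** transpose B) *v v = 0"
  hence "(B *v (transpose B *v v)) \<bullet> v = 0" by (simp only: matrix_vector_mul_assoc) simp
  hence "(transpose B *v v) \<bullet> (transpose B *v v) = 0" by (simp only: inner_transpose_matrix_vector)
  hence Btv: "transpose B *v v = 0" by simp
  obtain x where "v = B *v x" using surj by (metis UNIV_I image_iff)
  hence "v \<bullet> v = x \<bullet> (transpose B *v v)" by (simp only: inner_transpose_matrix_vector)
  thus "v = 0" unfolding Btv by simp
qed

lemma mult_pinv_eq_mat_1:
  fixes B :: "real^'c::finite^'m"
  assumes inv: "invertible (B ** transpose B)"
  shows "B ** pinv B = mat 1"
proof -
  define X where "X = transpose B ** matrix_inv (B ** transpose B)"
  have Xt: "transpose (matrix_inv (B ** transpose B)) = matrix_inv (B ** transpose B)"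
    by (rule transpose_matrix_inv_symmetric[OF inv]) (simp add: matrix_transpose_mul)
  have BX: "B ** X = mat 1" using matrix_inv_inverse(1)[OF inv] by (simp add: X_def matrix_mul_assoc)
  have "penrose B X"
    unfolding penrose_def
  proof (intro conjI)
    show "B ** X ** B = B" "transpose (B ** X) = B ** X" by (simp_all add: BX)
    show "X ** B ** X = X" by (simp add: BX flip: matrix_mul_assoc)
    show "transpose (X ** B) = X ** B" by (simp add: X_def matrix_transpose_mul Xt matrix_mul_assoc)
  qed
  thus ?thesis using BX by (simp add: pinv_eqI)
qed

lemma
  fixes B :: "real^'c::finite^'m" and g :: "'c \<Rightarrow> 'k::finite"
  assumes surj: "range (\<lambda>x. B *v x) = UNIV"
  shows simplex_wt_wplus: "simplex_wt (wplus B g j)"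
    and wplus_pos: "(pinv B *v axis j 1)$c \<noteq> 0 \<Longrightarrow> wplus B g j (g c) > 0"
proof -
  define h where "h = pinv B *v axis j (1::real)"
  define nrm where "nrm l = sqrt (\<Sum>c\<in>{c. g c = l}. (h$c)\<^sup>2)" for l
  define D where "D = (\<Sum>l\<in>UNIV. nrm l)"
  have wp: "wplus B g j = (\<lambda>l. nrm l / D)" by (simp add: wplus_def Let_def h_def nrm_def D_def)
  have nrm_nonneg: "nrm l \<ge> 0" for l by (simp add: nrm_def sum_nonneg)
  have nrm_pos: "nrm (g c) > 0" if "h$c \<noteq> 0" for c
  proof -
    have "0 < (h$c)\<^sup>2" using that by simp
    also have "\<dots> \<le> (\<Sum>c'\<in>{c'. g c' = g c}. (h$c')\<^sup>2)" by (rule member_le_sum) auto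
    finally show ?thesis by (simp add: nrm_def)
  qed
  have "B *v h = axis j 1"
    using mult_pinv_eq_mat_1[OF invertible_mult_transpose[OF surj]]
    by (simp add: h_def matrix_vector_mul_assoc)
  hence "h \<noteq> 0" by (auto simp: axis_eq_0_iff)
  then obtain c0 where "h$c0 \<noteq> 0" by (auto simp: vec_eq_iff)
  moreover have "nrm (g c0) \<le> D" unfolding D_def by (rule member_le_sum) (auto simp: nrm_nonneg)
  ultimately have D: "D > 0" using nrm_pos by fastforce
  show "simplex_wt (wplus B g j)"
    using nrm_nonneg D by (simp add: simplex_wt_def wp D_def sum_divide_distrib[symmetric])
  show "(pinv B *v axis j 1)$c \<noteq> 0 \<Longrightarrow> wplus B g j (g c) > 0"
    using nrm_pos D by (simp add: wp h_def)
qed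

lemma axis_in_range_NN_if_wplus_support:
  fixes B :: "real^'c::finite^'m" and g :: "'c \<Rightarrow> 'k::finite"
  assumes surj: "range (\<lambda>x. B *v x) = UNIV"
    and w: "\<And>l. w l \<ge> 0" and supp: "\<And>l. wplus B g j l > 0 \<Longrightarrow> w l > 0"
  shows "axis j 1 \<in> range (\<lambda>x. NN B g w *v x)"
proof -
  have "B *v (pinv B *v axis j 1) = axis j 1"
    using mult_pinv_eq_mat_1[OF invertible_mult_transpose[OF surj]]
    by (simp add: matrix_vector_mul_assoc)
  moreover have "B *v (pinv B *v axis j 1) \<in> range (\<lambda>x. NN B g w *v x)"
    unfolding NN_eq_outer_sum
  proof (rule mult_in_range_outer_sum_columns)
    show "w (g c) \<ge> 0" for c by (rule w)
    show "(pinv B *v axis j 1)$c \<noteq> 0 \<Longrightarrow> w (g c) > 0" for c by (rule supp, rule wplus_pos[OF surj])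
  qed
  ultimately show ?thesis by simp
qed

lemma range_NN_mono:
  assumes w: "\<And>l. w l \<ge> 0" and w': "\<And>l. w' l \<ge> 0" and supp: "\<And>l. w' l > 0 \<Longrightarrow> w l > 0"
    and "v \<in> range (\<lambda>x. NN B g w' *v x)"
  shows "v \<in> range (\<lambda>x. NN B g w *v x)"
  using assms unfolding NN_eq_outer_sum by (rule range_outer_sum_mono[of _ "\<lambda>c. w' (g c)"]) auto

lemma simplex_wt_midpoint:
  "simplex_wt w \<Longrightarrow> simplex_wt w' \<Longrightarrow> simplex_wt (\<lambda>l. (w l + w' l) / 2)"
  by (simp add: simplex_wt_def sum.distrib sum_divide_distrib[symmetric])

lemma abs_matrix_inv_info_mat_entry_le:
  fixes f :: "'i::finite \<Rightarrow> real^'m" and B :: "real^'c::finite^'m" and g :: "'c \<Rightarrow> 'k::finite"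
    and X :: "real^'m^'m"
  assumes d: "\<And>i. d i \<ge> 0" and inv: "invertible (info_mat f d)"
    and Phi: "PhiB B g (info_mat f d) \<le> \<alpha>" and w: "\<And>l. w l \<ge> 0"
    and NXN: "NN B g w ** X ** NN B g w = NN B g w" and Xsym: "transpose X = X"
    and ej: "axis j 1 \<in> range (\<lambda>x. NN B g w *v x)"
    and ek: "axis k 1 \<in> range (\<lambda>x. NN B g w *v x)" and jk: "j \<noteq> k"
  shows "\<bar>matrix_inv (info_mat f d) $ j $ k\<bar>
    \<le> (\<Sum>l\<in>UNIV. w l) * \<alpha> / 2 * lambda_max (transpose (Emat j k) ** X ** Emat j k)"
proof -
  let ?S = "matrix_inv (info_mat f d)"
  have S: "?S = outer_sum d (\<lambda>i. ?S *v f i)"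
    using matrix_inv_outer_sum[of d f] inv by (simp add: info_mat_eq_outer_sum)
  have "trace (NN B g w ** ?S) \<le> (\<Sum>l\<in>UNIV. w l) * PhiB B g (info_mat f d)"
    by (rule trace_NN_mult_matrix_inv_le[OF w])
  also have "\<dots> \<le> (\<Sum>l\<in>UNIV. w l) * \<alpha>" using Phi w by (intro mult_left_mono sum_nonneg)
  finally have T: "trace (NN B g w ** ?S) \<le> (\<Sum>l\<in>UNIV. w l) * \<alpha>" .
  show ?thesis
    using abs_outer_sum_entry_le_lambda_max[where d=d and u="\<lambda>i. ?S *v f i"
        and w="\<lambda>c. w (g c)" and b="\<lambda>c. column c B", OF d w]
      NXN Xsym ej ek jk T
    unfolding NN_eq_outer_sum S[symmetric] by blast
qed

lemma abs_matrix_inv_info_mat_entry_le_mult_transpose: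
  fixes f :: "'i::finite \<Rightarrow> real^'m" and B :: "real^'c::finite^'m" and g :: "'c \<Rightarrow> 'k::finite"
  assumes d: "\<And>i. d i \<ge> 0" and inv: "invertible (info_mat f d)"
    and Phi: "PhiB B g (info_mat f d) \<le> \<alpha>" and surj: "range (\<lambda>x. B *v x) = UNIV" and jk: "j \<noteq> k"
  shows "\<bar>matrix_inv (info_mat f d) $ j $ k\<bar>
    \<le> \<alpha> / 2 * real CARD('k) * lambda_max (transpose (Emat j k) ** matrix_inv (B ** transpose B) ** Emat j k)"
proof -
  have BBt: "invertible (B ** transpose B)" by (rule invertible_mult_transpose[OF surj])
  have "NN B g (\<lambda>_. 1) ** matrix_inv (B ** transpose B) ** NN B g (\<lambda>_. 1) = NN B g (\<lambda>_. 1)"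
    by (simp add: mult_transpose_eq_NN_one[symmetric] matrix_inv_inverse[OF BBt])
  moreover have "transpose (matrix_inv (B ** transpose B)) = matrix_inv (B ** transpose B)"
    by (rule transpose_matrix_inv_symmetric[OF BBt]) (simp add: matrix_transpose_mul)
  moreover have "v \<in> range (\<lambda>x. NN B g (\<lambda>_. 1) *v x)" for v
    using matrix_inv_inverse(1)[OF BBt]
    by (metis mult_transpose_eq_NN_one matrix_vector_mul_assoc matrix_vector_mul_lid rangeI)
  ultimately show ?thesis
    using abs_matrix_inv_info_mat_entry_le[OF d inv Phi, of "\<lambda>_. 1"] jk by (simp add: mult_ac)
qed

lemma abs_matrix_inv_info_mat_entry_le_pinv:
  fixes f :: "'i::finite \<Rightarrow> real^'m" and B :: "real^'c::finite^'m" and g :: "'c \<Rightarrow> 'k::finite"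
  assumes d: "\<And>i. d i \<ge> 0" and inv: "invertible (info_mat f d)"
    and Phi: "PhiB B g (info_mat f d) \<le> \<alpha>" and w: "simplex_wt w"
    and ej: "axis j 1 \<in> range (\<lambda>x. NN B g w *v x)"
    and ek: "axis k 1 \<in> range (\<lambda>x. NN B g w *v x)" and jk: "j \<noteq> k"
  shows "\<bar>matrix_inv (info_mat f d) $ j $ k\<bar>
    \<le> \<alpha> / 2 * lambda_max (transpose (Emat j k) ** pinv (NN B g w) ** Emat j k)"
  using abs_matrix_inv_info_mat_entry_le[OF d inv Phi _ pinv_symmetric[OF transpose_NN] ej ek jk] w
  by (simp add: simplex_wt_def)

theorem theorem2:
  fixes f :: "'i::finite \<Rightarrow> real^'m::finite"
    and N :: nat
    and B :: "real^'c::finite^'m"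
    and g :: "'c \<Rightarrow> 'k::finite"
    and d0 dstar :: "'i \<Rightarrow> real"
    and \<alpha> :: real
    and wj wk :: "'k \<Rightarrow> real"
    and j k :: 'm
  assumes "2 \<le> CARD('m)" and "CARD('m) \<le> N" and "N \<le> CARD('i)"
    and "span (range f) = UNIV"
    and "surj g"
    and "range (\<lambda>x. B *v x) = UNIV"
    and "\<forall>c. column c B \<noteq> 0"
    and "is_design N d0" and "invertible (info_mat f d0)"
    and "\<alpha> = PhiB B g (info_mat f d0)"
    and "PhiB_optimal f N B g dstar"
    and "is_wstar B g j wj" and "is_wstar B g k wk"
    and "j \<noteq> k"
  shows "\<bar>matrix_inv (info_mat f dstar) $ j $ k\<bar>
           \<le> \<alpha> / 2 * real CARD('k) *
             lambda_max (transpose (Emat j k) ** matrix_inv (B ** transpose B) ** Emat j k)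
       \<and> \<bar>matrix_inv (info_mat f dstar) $ j $ k\<bar>
           \<le> \<alpha> / 2 * lambda_max (transpose (Emat j k) **
                 pinv (NN B g (\<lambda>l. (wplus B g j l + wplus B g k l) / 2)) ** Emat j k)
       \<and> \<bar>matrix_inv (info_mat f dstar) $ j $ k\<bar>
           \<le> \<alpha> / 2 * lambda_max (transpose (Emat j k) **
                 pinv (NN B g (\<lambda>l. (wj l + wk l) / 2)) ** Emat j k)"
proof -
  let ?wp = "\<lambda>l. (wplus B g j l + wplus B g k l) / 2" and ?ws = "\<lambda>l. (wj l + wk l) / 2"
  have "is_design N dstar" and inv: "invertible (info_mat f dstar)"
    and "PhiB B g (info_mat f dstar) \<le> PhiB B g (info_mat f d0)"
    using assms(8,9,11) unfolding PhiB_optimal_def by blast+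
  hence d: "\<And>i. dstar i \<ge> 0" and Phi: "PhiB B g (info_mat f dstar) \<le> \<alpha>"
    using assms(10) is_design_nonneg by auto
  have wj: "simplex_wt wj" "axis j 1 \<in> range (\<lambda>x. NN B g wj *v x)"
    and wk: "simplex_wt wk" "axis k 1 \<in> range (\<lambda>x. NN B g wk *v x)"
    using assms(12,13) unfolding is_wstar_def by blast+
  have wp: "simplex_wt ?wp" using simplex_wt_midpoint simplex_wt_wplus[OF assms(6)] by blast
  have ws: "simplex_wt ?ws" using simplex_wt_midpoint wj(1) wk(1) by blast
  have "wplus B g j l \<ge> 0" "wplus B g k l \<ge> 0" for l
    using simplex_wt_wplus[OF assms(6)] by (auto simp: simplex_wt_def)
  hence "axis j 1 \<in> range (\<lambda>x. NN B g ?wp *v x)" "axis k 1 \<in> range (\<lambda>x. NN B g ?wp *v x)"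
    using wp by (auto simp: simplex_wt_def add_pos_nonneg add_nonneg_pos
        intro!: axis_in_range_NN_if_wplus_support[OF assms(6)])
  moreover have "wj l \<ge> 0" "wk l \<ge> 0" for l using wj(1) wk(1) by (auto simp: simplex_wt_def)
  hence "axis j 1 \<in> range (\<lambda>x. NN B g ?ws *v x)" "axis k 1 \<in> range (\<lambda>x. NN B g ?ws *v x)"
    by (auto simp: add_pos_nonneg add_nonneg_pos
        intro: range_NN_mono[OF _ _ _ wj(2)] range_NN_mono[OF _ _ _ wk(2)])
  ultimately show ?thesis
    using abs_matrix_inv_info_mat_entry_le_mult_transpose[OF d inv Phi assms(6,14)]
      abs_matrix_inv_info_mat_entry_le_pinv[OF d inv Phi wp _ _ assms(14)]
      abs_matrix_inv_info_mat_entry_le_pinv[OF d inv Phi ws _ _ assms(14)]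
    by blast
qed

end
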